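(* For any $t\in \mathbb{T}_n$, denote the value of the $(1,n)$ entry of its matrix format $\hat{t}$ as $\hat{t}_{1,n}$, and let $J_n$ be the $(n\times n)$ exchange matrix (entries $1$ on the antidiagonal, $0$ elsewhere). Then $\frac{1}{\hat{t}_{1,n}}\hat{t}\, J_n$ is a normalized uncurling metric of $\mathbb{T}_n$ if $\hat{t}_{1,n}\ne 0$, and all normalized uncurling metrics of $\mathbb{T}_n$ can be written in this form for some $t\in \mathbb{T}_n$.
   Context: $\mathbb{T}_n$ is the $n$-dimensional real unital algebra (usual matrix product) of real upper triangular Toeplitz $(n\times n)$-matrices, with elements $s=(x_1,\dots,x_n)$ giving the constant values on the successive diagonals starting from the main diagonal; its identity is $\mathbf{1}=(1,0,\dots,0)$, so $\|\mathbf{1}\|^2=\mathbf{1}\cdot\mathbf{1}=1$. An uncurling metric is a real symmetric $(n\times n)$-matrix $L$ satisfying $d\big((s^{-1})^T L\,\mathbf{d}s\big)=0$ on an open ball of units centered at $\mathbf{1}$ (with $\mathbf{d}s=(dx_1,\dots,dx_n)^T$ and $d$ the exterior derivative). A normalized uncurling metric is an uncurling metric $L$ that additionally satisfies $s^T L s^{-1}=\|\mathbf{1}\|^2$ on a sufficiently small neighborhood of $\mathbf{1}$. It is known that every uncurling metric of $\mathbb{T}_n$ has the form $\hat t J_n$ for some $t\in\mathbb{T}_n$. *)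

theory Defs
  imports Complex_Main
begin

(* Elements of T_n are represented as vectors s :: nat => real, where s k (k < n)
   is the value on the k-th superdiagonal (0-indexed; s 0 is the main diagonal).
   Components with index >= n are irrelevant. Matrices are nat => nat => real,
   0-indexed, only entries with indices < n are meaningful. *)

definition tmul :: "nat \<Rightarrow> (nat \<Rightarrow> real) \<Rightarrow> (nat \<Rightarrow> real) \<Rightarrow> (nat \<Rightarrow> real)" where
  "tmul n a b = (\<lambda>k. if k < n then (\<Sum>i=0..k. a i * b (k - i)) else 0)"

definition tone :: "nat \<Rightarrow> nat \<Rightarrow> real" where
  "tone n = (\<lambda>k. if k = 0 \<and> k < n then 1 else 0)"

definition tinv :: "nat \<Rightarrow> (nat \<Rightarrow> real) \<Rightarrow> (nat \<Rightarrow> real)" where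
  "tinv n s = (THE b. (\<forall>k\<ge>n. b k = 0) \<and> tmul n s b = tone n)"

definition tmat :: "nat \<Rightarrow> (nat \<Rightarrow> real) \<Rightarrow> nat \<Rightarrow> nat \<Rightarrow> real" where
  "tmat n t = (\<lambda>i j. if i \<le> j then t (j - i) else 0)"

definition exch :: "nat \<Rightarrow> nat \<Rightarrow> nat \<Rightarrow> real" where
  "exch n = (\<lambda>i j. if i + j = n - 1 then 1 else 0)"

definition mmul :: "nat \<Rightarrow> (nat \<Rightarrow> nat \<Rightarrow> real) \<Rightarrow> (nat \<Rightarrow> nat \<Rightarrow> real) \<Rightarrow> nat \<Rightarrow> nat \<Rightarrow> real" where
  "mmul n A B = (\<lambda>i j. \<Sum>k<n. A i k * B k j)"

definition symmetric_mat :: "nat \<Rightarrow> (nat \<Rightarrow> nat \<Rightarrow> real) \<Rightarrow> bool" where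
  "symmetric_mat n L \<longleftrightarrow> (\<forall>i<n. \<forall>j<n. L i j = L j i)"

definition tball :: "nat \<Rightarrow> (nat \<Rightarrow> real) \<Rightarrow> real \<Rightarrow> (nat \<Rightarrow> real) set" where
  "tball n c r = {s. sqrt (\<Sum>i<n. (s i - c i)^2) < r}"

text \<open>Coefficient of dx_j in the 1-form (s^{-1})^T L ds.\<close>
definition form_coeff :: "nat \<Rightarrow> (nat \<Rightarrow> nat \<Rightarrow> real) \<Rightarrow> nat \<Rightarrow> (nat \<Rightarrow> real) \<Rightarrow> real" where
  "form_coeff n L j s = (\<Sum>i<n. tinv n s i * L i j)"

definition has_partial :: "((nat \<Rightarrow> real) \<Rightarrow> real) \<Rightarrow> nat \<Rightarrow> (nat \<Rightarrow> real) \<Rightarrow> real \<Rightarrow> bool" where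
  "has_partial F k s D \<longleftrightarrow> ((\<lambda>h. F (s(k := s k + h))) has_real_derivative D) (at 0)"

text \<open>d((s^{-1})^T L ds) = 0 at s: the coefficients have symmetric partial derivatives.\<close>
definition closed_at :: "nat \<Rightarrow> (nat \<Rightarrow> nat \<Rightarrow> real) \<Rightarrow> (nat \<Rightarrow> real) \<Rightarrow> bool" where
  "closed_at n L s \<longleftrightarrow> (\<forall>j<n. \<forall>k<n. \<exists>D.
      has_partial (form_coeff n L j) k s D \<and> has_partial (form_coeff n L k) j s D)"

definition uncurling :: "nat \<Rightarrow> (nat \<Rightarrow> nat \<Rightarrow> real) \<Rightarrow> bool" where
  "uncurling n L \<longleftrightarrow> symmetric_mat n L \<and>
     (\<exists>r>0. (\<forall>s\<in>tball n (tone n) r. s 0 \<noteq> 0) \<and> (\<forall>s\<in>tball n (tone n) r. closed_at n L s))"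

definition normalized_uncurling :: "nat \<Rightarrow> (nat \<Rightarrow> nat \<Rightarrow> real) \<Rightarrow> bool" where
  "normalized_uncurling n L \<longleftrightarrow> uncurling n L \<and>
     (\<exists>r>0. \<forall>s\<in>tball n (tone n) r. s 0 \<noteq> 0 \<and>
        (\<Sum>i<n. \<Sum>j<n. s i * L i j * tinv n s j) = (\<Sum>i<n. tone n i * tone n i))"

end

theory Submission
  imports Defs "HOL-Computational_Algebra.Formal_Power_Series"
begin

text \<open>Identify T_n with real power series modulo X^n, so that s^-1 is the truncated inverse
  series. Moving s along the k-th coordinate adds h X^k to the series, and the coefficients of
  (s + h X^k)^-1 have derivative -s^-2 X^k at h = 0. Hence (s^-1)^T L ds is closed at s iff
  sum_m (s^-2)_m (L(m+k, j) - L(m+j, k)) = 0 for all j, k, entries with an index >= n read as 0.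
  A Hankel matrix L(i, j) = g(i+j), zero for i+j >= n, satisfies this identically, and for it
  s^T L s^-1 = sum_m g(m) (s s^-1)_m = g(0); the matrix of t times J_n is such a matrix with
  g(m) = t(n-1-m). Conversely, at s = 1 + e X^p closedness holds for all small e, and
  differentiating in e at 0 gives L(p+k, j) = L(p+j, k), so L is Hankel; normalisation at s = 1
  forces L(0, 0) = 1.\<close>

abbreviation toeplitz_fps :: "nat \<Rightarrow> (nat \<Rightarrow> real) \<Rightarrow> real fps" where
  "toeplitz_fps n s \<equiv> fps_cutoff n (Abs_fps s)"

lemma tmul_eq_fps_mult_nth:
  assumes "k < n"
  shows "tmul n a b k = fps_nth (toeplitz_fps n a * toeplitz_fps n b) k"
  using assms by (auto simp: tmul_def fps_mult_nth intro!: sum.cong)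

lemma tinv_eq_fps_inverse_nth:
  assumes "k < n" and "s 0 \<noteq> 0"
  shows "tinv n s k = fps_nth (inverse (toeplitz_fps n s)) k"
proof -
  define F where "F = toeplitz_fps n s"
  define c where "c k = (if k < n then fps_nth (inverse F) k else 0)" for k
  have F0: "fps_nth F 0 \<noteq> 0" using assms by (simp add: F_def)
  have solves_iff: "tmul n s b = tone n \<longleftrightarrow> fps_cutoff n (F * toeplitz_fps n b) = fps_cutoff n 1"
    for b
  proof -
    have "tmul n s b = tone n \<longleftrightarrow> (\<forall>k<n. tmul n s b k = tone n k)"
      by (auto simp: fun_eq_iff tmul_def tone_def)
    then show ?thesis
      by (simp add: fps_cutoff_eq_fps_cutoff_iff tmul_eq_fps_mult_nth tone_def F_def)
  qed
  have "toeplitz_fps n c = fps_cutoff n (inverse F)"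
    by (rule fps_ext) (simp add: c_def)
  then have "fps_cutoff n (F * toeplitz_fps n c) = fps_cutoff n (F * inverse F)"
    by (metis fps_cutoff_eq_fps_cutoff_iff fps_cutoff_right_mult_nth)
  then have c_solves: "(\<forall>k\<ge>n. c k = 0) \<and> tmul n s c = tone n"
    by (simp add: solves_iff c_def inverse_mult_eq_1'[OF F0])
  have "b = c" if b: "(\<forall>k\<ge>n. b k = 0) \<and> tmul n s b = tone n" for b
  proof
    fix k
    have B: "toeplitz_fps n b = Abs_fps b"
      using b by (intro fps_ext) simp
    show "b k = c k"
    proof (cases "k < n")
      case True
      have "b k = fps_nth (inverse F * (F * toeplitz_fps n b)) k"
        by (simp add: B mult.assoc[symmetric] inverse_mult_eq_1[OF F0])
      also have "\<dots> = fps_nth (inverse F * fps_cutoff n (F * toeplitz_fps n b)) k"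
        using True by (simp add: fps_cutoff_right_mult_nth)
      also have "\<dots> = fps_nth (inverse F) k"
        using True b by (simp add: solves_iff fps_cutoff_right_mult_nth)
      finally show ?thesis using True by (simp add: c_def)
    qed (use b c_def in auto)
  qed
  then have "tinv n s = c"
    unfolding tinv_def
    by (rule the_equality[where P = "\<lambda>b. (\<forall>k\<ge>n. b k = 0) \<and> tmul n s b = tone n", OF c_solves])
  then show ?thesis using assms(1) by (simp add: c_def F_def)
qed

lemma isCont_fps_inverse_nth:
  fixes P :: "real \<Rightarrow> real fps"
  assumes cont: "\<And>i. isCont (\<lambda>h. fps_nth (P h) i) a" and P0: "fps_nth (P a) 0 \<noteq> 0"
  shows "isCont (\<lambda>h. fps_nth (inverse (P h)) m) a"
proof (induction m rule: less_induct)
  case (less m)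
  have inv0: "isCont (\<lambda>h. inverse (fps_nth (P h) 0)) a"
    using cont P0 by (intro continuous_intros)
  show ?case
  proof (cases m)
    case 0
    then show ?thesis using inv0 by simp
  next
    case (Suc m')
    have "fps_nth (inverse (P h)) m =
        - inverse (fps_nth (P h) 0) * (\<Sum>i=1..m. fps_nth (P h) i * fps_nth (inverse (P h)) (m - i))"
      for h using Suc by (simp add: fps_inverse_def)
    moreover have "isCont (\<lambda>h. - inverse (fps_nth (P h) 0) *
        (\<Sum>i=1..m. fps_nth (P h) i * fps_nth (inverse (P h)) (m - i))) a"
      using inv0 cont less Suc P0 by (intro continuous_intros) auto
    ultimately show ?thesis by simp
  qed
qed

lemma DERIV_fps_mult_nth:
  fixes A B :: "real \<Rightarrow> real fps"
  assumes "\<And>i. ((\<lambda>h. fps_nth (A h) i) has_real_derivative fps_nth A' i) (at a)"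
    and "\<And>i. ((\<lambda>h. fps_nth (B h) i) has_real_derivative fps_nth B' i) (at a)"
  shows "((\<lambda>h. fps_nth (A h * B h) m) has_real_derivative fps_nth (A' * B a + A a * B') m) (at a)"
  unfolding fps_mult_nth fps_add_nth
  by (rule DERIV_cong[OF DERIV_sum[OF DERIV_mult[OF assms]]])
     (simp add: sum.distrib mult.commute)

text \<open>The resolvent identity G h - G 0 = - h G h D G 0 for G h = (F + h D)^-1 reduces the
  derivative to the continuity of the coefficients of G.\<close>
lemma DERIV_fps_inverse_nth_line:
  fixes F D :: "real fps"
  assumes F0: "fps_nth F 0 \<noteq> 0"
  shows "((\<lambda>h. fps_nth (inverse (F + fps_const h * D)) i) has_real_derivative
           - fps_nth (inverse F ^ 2 * D) i) (at 0)"
proof -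
  define P where "P h = F + fps_const h * D" for h
  define G where "G h = inverse (P h)" for h
  have P_cont: "isCont (\<lambda>h. fps_nth (P h) a) 0" for a
    unfolding P_def by (auto intro!: continuous_intros)
  have P0: "fps_nth (P 0) 0 \<noteq> 0" using F0 by (simp add: P_def)
  have G_cont: "isCont (\<lambda>h. fps_nth (G h) a) 0" for a
    unfolding G_def by (rule isCont_fps_inverse_nth[OF P_cont P0])
  have "\<forall>\<^sub>F h in at 0. fps_nth (P h) 0 \<noteq> 0"
    using tendsto_imp_eventually_ne[OF isContD[OF P_cont] P0] .
  moreover have "(fps_nth (G h) i - fps_nth (G 0) i) / h = - fps_nth (G h * (D * G 0)) i"
    if h: "h \<noteq> 0" and Ph: "fps_nth (P h) 0 \<noteq> 0" for h
  proof -
    have "G h - G 0 = G h * (P 0 * G 0) - (G h * P h) * G 0"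
      using Ph P0 unfolding G_def by (simp add: inverse_mult_eq_1 inverse_mult_eq_1')
    also have "\<dots> = fps_const (- h) * (G h * (D * G 0))"
      by (simp add: P_def algebra_simps fps_const_neg[symmetric] del: fps_const_neg)
    finally have "fps_nth (G h) i - fps_nth (G 0) i = - h * fps_nth (G h * (D * G 0)) i"
      by (metis fps_sub_nth fps_mult_left_const_nth)
    then show ?thesis using h by (simp add: field_simps)
  qed
  ultimately have "\<forall>\<^sub>F h in at 0.
      - fps_nth (G h * (D * G 0)) i = (fps_nth (G h) i - fps_nth (G 0) i) / (h - 0)"
    by (auto simp: eventually_at_filter elim!: eventually_mono)
  moreover have "isCont (\<lambda>h. - fps_nth (G h * (D * G 0)) i) 0"
    unfolding fps_mult_nth using G_cont by (intro continuous_intros)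
  ultimately have dG:
      "((\<lambda>h. fps_nth (G h) i) has_real_derivative - fps_nth (G 0 * (D * G 0)) i) (at 0)"
    unfolding has_field_derivative_iff by (auto dest!: isContD intro: Lim_transform_eventually)
  have "G 0 * (D * G 0) = inverse F ^ 2 * D"
    by (simp add: G_def P_def power2_eq_square mult_ac)
  with dG show ?thesis by (simp only: G_def P_def)
qed

lemma DERIV_fps_inverse_square_nth_line:
  fixes F D :: "real fps"
  assumes F0: "fps_nth F 0 \<noteq> 0"
  shows "((\<lambda>h. fps_nth (inverse (F + fps_const h * D) ^ 2) i) has_real_derivative
           - 2 * fps_nth (inverse F ^ 3 * D) i) (at 0)"
proof -
  define G where "G h = inverse (F + fps_const h * D)" for h
  have dG: "((\<lambda>h. fps_nth (G h) j) has_real_derivative fps_nth (- (inverse F ^ 2 * D)) j) (at 0)"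
    for j
    using DERIV_fps_inverse_nth_line[OF F0] by (simp add: G_def)
  have dGG: "((\<lambda>h. fps_nth (G h * G h) i) has_real_derivative
      fps_nth ((- (inverse F ^ 2 * D)) * G 0 + G 0 * (- (inverse F ^ 2 * D))) i) (at 0)"
    by (rule DERIV_fps_mult_nth[OF dG dG])
  have "(- (inverse F ^ 2 * D)) * G 0 + G 0 * (- (inverse F ^ 2 * D)) =
      fps_const (- 2) * (inverse F ^ 3 * D)"
    by (simp add: G_def algebra_simps power3_eq_cube power2_eq_square
        fps_const_neg numeral_fps_const)
  with dGG show ?thesis
    by (simp only: fps_mult_left_const_nth G_def power2_eq_square)
qed

lemma toeplitz_fps_update:
  assumes "k < n"
  shows "toeplitz_fps n (s(k := s k + h)) = toeplitz_fps n s + fps_const h * fps_X ^ k"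
  using assms by (intro fps_ext) (auto simp: fps_X_power_nth)

lemma has_partial_form_coeff:
  assumes k: "k < n" and s0: "s 0 \<noteq> 0"
  shows "has_partial (form_coeff n L j) k s
           (- (\<Sum>i<n. fps_nth (inverse (toeplitz_fps n s) ^ 2 * fps_X ^ k) i * L i j))"
proof -
  have "\<forall>\<^sub>F h in nhds 0. (s(k := s k + h)) 0 \<noteq> 0"
    unfolding eventually_nhds_metric
    by (rule exI[of _ "\<bar>s 0\<bar>"]) (use s0 in \<open>auto simp: dist_real_def\<close>)
  then have "\<forall>\<^sub>F h in nhds 0. form_coeff n L j (s(k := s k + h)) =
      (\<Sum>i<n. fps_nth (inverse (toeplitz_fps n s + fps_const h * fps_X ^ k)) i * L i j)"
    by eventually_elim (simp add: form_coeff_def tinv_eq_fps_inverse_nth toeplitz_fps_update[OF k])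
  moreover have "((\<lambda>h. \<Sum>i<n. fps_nth (inverse (toeplitz_fps n s + fps_const h * fps_X ^ k)) i * L i j)
      has_real_derivative (\<Sum>i<n. - fps_nth (inverse (toeplitz_fps n s) ^ 2 * fps_X ^ k) i * L i j)) (at 0)"
    using k s0 by (intro DERIV_sum DERIV_cmult_right DERIV_fps_inverse_nth_line) simp
  ultimately show ?thesis
    unfolding has_partial_def by (simp add: DERIV_cong_ev sum_negf)
qed

lemma has_partial_unique: "has_partial F k s D \<Longrightarrow> has_partial F k s D' \<Longrightarrow> D = D'"
  unfolding has_partial_def by (rule DERIV_unique)

lemma sum_fps_mult_X_power_nth:
  assumes "k \<le> n"
  shows "(\<Sum>i<n. fps_nth (W * fps_X ^ k) i * g i) =
         (\<Sum>m<n. fps_nth W m * (if m + k < n then g (m + k) else 0))"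
proof -
  have "(\<Sum>i<n. fps_nth (W * fps_X ^ k) i * g i) = (\<Sum>i\<in>{k..<n}. fps_nth W (i - k) * g i)"
    by (rule sum.mono_neutral_cong_right) (auto simp: fps_X_power_mult_right_nth)
  also have "\<dots> = (\<Sum>m<n - k. fps_nth W m * g (m + k))"
    using assms by (intro sum.reindex_bij_witness[of _ "\<lambda>m. m + k" "\<lambda>i. i - k"]) auto
  also have "\<dots> = (\<Sum>m<n. fps_nth W m * (if m + k < n then g (m + k) else 0))"
    by (rule sum.mono_neutral_cong_left) auto
  finally show ?thesis .
qed

definition hankel_defect :: "nat \<Rightarrow> (nat \<Rightarrow> nat \<Rightarrow> real) \<Rightarrow> nat \<Rightarrow> nat \<Rightarrow> nat \<Rightarrow> real" where
  "hankel_defect n L j k m =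
     (if m + k < n then L (m + k) j else 0) - (if m + j < n then L (m + j) k else 0)"

lemma closed_at_iff_hankel_defect:
  assumes s0: "s 0 \<noteq> 0"
  shows "closed_at n L s \<longleftrightarrow> (\<forall>j<n. \<forall>k<n.
           (\<Sum>m<n. fps_nth (inverse (toeplitz_fps n s) ^ 2) m * hankel_defect n L j k m) = 0)"
proof -
  define W where "W = inverse (toeplitz_fps n s) ^ 2"
  define V where "V j k = - (\<Sum>i<n. fps_nth (W * fps_X ^ k) i * L i j)" for j k
  have partial: "has_partial (form_coeff n L j) k s D \<longleftrightarrow> D = V j k" if "k < n" for j k D
    using has_partial_form_coeff[of k n s L j, OF that s0] has_partial_unique
    unfolding V_def W_def by blast
  have "V j k = V k j \<longleftrightarrow> (\<Sum>m<n. fps_nth W m * hankel_defect n L j k m) = 0"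
    if "j < n" "k < n" for j k
    using that unfolding V_def hankel_defect_def
    by (simp add: sum_fps_mult_X_power_nth right_diff_distrib sum_subtractf)
  then show ?thesis
    unfolding closed_at_def W_def by (auto simp: partial)
qed

definition hankel :: "nat \<Rightarrow> (nat \<Rightarrow> real) \<Rightarrow> nat \<Rightarrow> nat \<Rightarrow> real" where
  "hankel n g i j = (if i + j < n then g (i + j) else 0)"

lemma mmul_tmat_exch:
  assumes "i < n" "j < n"
  shows "mmul n (tmat n t) (exch n) i j = hankel n (\<lambda>m. t (n - 1 - m)) i j"
proof -
  have "mmul n (tmat n t) (exch n) i j =
      (\<Sum>m<n. if m = n - 1 - j then (if i \<le> m then t (m - i) else 0) else 0)"
    unfolding mmul_def tmat_def exch_def using assms by (intro sum.cong) auto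
  also have "\<dots> = hankel n (\<lambda>m. t (n - 1 - m)) i j"
    using assms by (auto simp: hankel_def add.commute)
  finally show ?thesis .
qed

lemma hankel_defect_hankel:
  assumes "j < n" "k < n"
  shows "hankel_defect n (hankel n g) j k m = 0"
  using assms by (simp add: hankel_defect_def hankel_def add_ac)

lemma sum_hankel_bilinear:
  "(\<Sum>i<n. \<Sum>j<n. a i * hankel n g i j * b j) =
   (\<Sum>m<n. g m * fps_nth (toeplitz_fps n a * toeplitz_fps n b) m)"
proof -
  have "(\<Sum>i<n. \<Sum>j<n. a i * hankel n g i j * b j) =
      (\<Sum>(i, j)\<in>{..<n} \<times> {..<n}. a i * hankel n g i j * b j)"
    by (rule sum.cartesian_product)
  also have "\<dots> = (\<Sum>(i, j)\<in>{(i, j). i + j < n}. a i * b j * g (i + j))"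
    by (rule sum.mono_neutral_cong_right) (auto simp: hankel_def split: if_splits)
  also have "\<dots> = (\<Sum>m<n. \<Sum>i\<le>m. a i * b (m - i) * g m)"
    by (simp add: sum.triangle_reindex)
  also have "\<dots> = (\<Sum>m<n. g m * fps_nth (toeplitz_fps n a * toeplitz_fps n b) m)"
    by (auto simp: fps_mult_nth atLeast0AtMost sum_distrib_left mult_ac intro!: sum.cong)
  finally show ?thesis .
qed

lemma normalized_uncurling_cong:
  assumes "\<forall>i<n. \<forall>j<n. L i j = L' i j"
  shows "normalized_uncurling n L \<longleftrightarrow> normalized_uncurling n L'"
proof -
  have "form_coeff n L j = form_coeff n L' j" if "j < n" for j
    using assms that by (auto simp: form_coeff_def fun_eq_iff intro!: sum.cong)
  then have "closed_at n L s = closed_at n L' s" for s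
    by (simp add: closed_at_def)
  moreover have "(\<Sum>i<n. \<Sum>j<n. s i * L i j * tinv n s j) =
      (\<Sum>i<n. \<Sum>j<n. s i * L' i j * tinv n s j)" for s
    using assms by (auto intro!: sum.cong)
  ultimately show ?thesis
    using assms by (simp add: normalized_uncurling_def uncurling_def symmetric_mat_def)
qed

lemma toeplitz_fps_tone: "0 < n \<Longrightarrow> toeplitz_fps n (tone n) = 1"
  by (intro fps_ext) (simp add: tone_def)

lemma toeplitz_fps_mult_tinv_nth:
  assumes "m < n" and s0: "s 0 \<noteq> 0"
  shows "fps_nth (toeplitz_fps n s * toeplitz_fps n (tinv n s)) m = fps_nth 1 m"
proof -
  have "toeplitz_fps n (tinv n s) = fps_cutoff n (inverse (toeplitz_fps n s))"
    using s0 by (intro fps_ext) (simp add: tinv_eq_fps_inverse_nth)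
  moreover have "fps_nth (toeplitz_fps n s) 0 \<noteq> 0"
    using assms by simp
  ultimately show ?thesis
    using assms(1) by (simp add: fps_cutoff_right_mult_nth inverse_mult_eq_1')
qed

lemma tone_in_tball: "0 < r \<Longrightarrow> tone n \<in> tball n (tone n) r"
  by (simp add: tball_def)

lemma tball_one_nonzero:
  assumes "s \<in> tball n (tone n) 1" and "0 < n"
  shows "s 0 \<noteq> 0"
proof
  assume "s 0 = 0"
  then have "1 \<le> (\<Sum>i<n. (s i - tone n i)\<^sup>2)"
    using member_le_sum[of 0 "{..<n}" "\<lambda>i. (s i - tone n i)\<^sup>2"] assms(2) by (simp add: tone_def)
  then show False
    using assms(1) by (simp add: tball_def)
qed

lemma tone_update_in_tball:
  assumes "\<bar>e\<bar> < r" and "p < n"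
  shows "(tone n)(p := tone n p + e) \<in> tball n (tone n) r"
proof -
  have "(\<Sum>i<n. (((tone n)(p := tone n p + e)) i - tone n i)\<^sup>2) = e\<^sup>2"
    using assms(2) by (simp add: if_distrib[of "\<lambda>x. (x - _)\<^sup>2"] cong: if_cong)
  then show ?thesis
    using assms(1) by (simp add: tball_def)
qed

lemma normalized_uncurling_hankel:
  assumes n: "0 < n" and g0: "g 0 = 1"
  shows "normalized_uncurling n (hankel n g)"
proof -
  have "symmetric_mat n (hankel n g)"
    by (simp add: symmetric_mat_def hankel_def add.commute)
  moreover have "closed_at n (hankel n g) s" if "s \<in> tball n (tone n) 1" for s
    using tball_one_nonzero[OF that n]
    by (simp add: closed_at_iff_hankel_defect hankel_defect_hankel)
  moreover have "(\<Sum>i<n. \<Sum>j<n. s i * hankel n g i j * tinv n s j) = (\<Sum>i<n. tone n i * tone n i)"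
    if "s \<in> tball n (tone n) 1" for s
  proof -
    have "(\<Sum>i<n. \<Sum>j<n. s i * hankel n g i j * tinv n s j) = (\<Sum>m<n. g m * fps_nth 1 m)"
      using tball_one_nonzero[OF that n]
      by (simp add: sum_hankel_bilinear toeplitz_fps_mult_tinv_nth)
    also have "\<dots> = 1"
      using n g0 by (simp add: if_distrib cong: if_cong)
    also have "\<dots> = (\<Sum>i<n. tone n i * tone n i)"
      using n by (simp add: tone_def if_distrib cong: if_cong)
    finally show ?thesis .
  qed
  ultimately show ?thesis
    unfolding normalized_uncurling_def uncurling_def
    using tball_one_nonzero n by (intro conjI exI[of _ 1]) auto
qed

text \<open>Closedness at s = 1 + e X^p for all small e; the derivative of (1 + e X^p)^-2 at e = 0 is
  -2 X^p, which isolates the p-th defect.\<close>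
lemma hankel_defect_eq_0_if_closed_near_one:
  assumes r: "0 < r" and closed: "\<forall>s\<in>tball n (tone n) r. s 0 \<noteq> 0 \<and> closed_at n L s"
    and "p < n" "j < n" "k < n"
  shows "hankel_defect n L j k p = 0"
proof -
  define \<phi> where "\<phi> e =
      (\<Sum>m<n. fps_nth (inverse (1 + fps_const e * fps_X ^ p) ^ 2) m * hankel_defect n L j k m)" for e
  have "\<phi> e = 0" if "\<bar>e\<bar> < r" for e
  proof -
    let ?s = "(tone n)(p := tone n p + e)"
    have "?s 0 \<noteq> 0" and "closed_at n L ?s"
      using closed tone_update_in_tball[OF that \<open>p < n\<close>] by blast+
    moreover have "toeplitz_fps n ?s = 1 + fps_const e * fps_X ^ p"
      using \<open>p < n\<close> by (simp add: toeplitz_fps_update toeplitz_fps_tone)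
    ultimately show ?thesis
      using \<open>j < n\<close> \<open>k < n\<close> closed_at_iff_hankel_defect[of ?s n L] by (simp add: \<phi>_def)
  qed
  then have "\<forall>\<^sub>F e in nhds 0. \<phi> e = 0"
    unfolding eventually_nhds_metric using r by (auto simp: dist_real_def)
  then have "(\<phi> has_real_derivative 0) (at 0)"
    by (simp add: DERIV_cong_ev)
  moreover have "(\<phi> has_real_derivative
      (\<Sum>m<n. - 2 * fps_nth (fps_X ^ p) m * hankel_defect n L j k m)) (at 0)"
    unfolding \<phi>_def
    using DERIV_fps_inverse_square_nth_line[of 1 "fps_X ^ p"]
    by (intro DERIV_sum DERIV_cmult_right) simp
  moreover have "(\<Sum>m<n. - 2 * fps_nth (fps_X ^ p) m * hankel_defect n L j k m) =
      (\<Sum>m<n. if m = p then - 2 * hankel_defect n L j k p else 0)"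
    by (intro sum.cong) (auto simp: fps_X_power_nth)
  ultimately show ?thesis
    using DERIV_unique \<open>p < n\<close> by fastforce
qed

lemma normalized_uncurling_imp_hankel:
  assumes L: "normalized_uncurling n L" and n: "0 < n"
  shows "L 0 0 = 1" and "\<forall>i<n. \<forall>j<n. L i j = hankel n (\<lambda>m. L m 0) i j"
proof -
  obtain r where "0 < r" and normalized: "\<forall>s\<in>tball n (tone n) r.
      (\<Sum>i<n. \<Sum>j<n. s i * L i j * tinv n s j) = (\<Sum>i<n. tone n i * tone n i)"
    using L unfolding normalized_uncurling_def by blast
  have "tinv n (tone n) j = tone n j" if "j < n" for j
    using tinv_eq_fps_inverse_nth[of j n "tone n"] that
    unfolding toeplitz_fps_tone[OF n] by (simp add: tone_def)
  then have "(\<Sum>i<n. \<Sum>j<n. tone n i * L i j * tinv n (tone n) j) =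
      (\<Sum>i<n. \<Sum>j<n. tone n i * L i j * tone n j)"
    by (intro sum.cong refl) simp
  also have "\<dots> = L 0 0"
    using n by (simp add: tone_def if_distrib[of "\<lambda>x. _ * x"] if_distrib[of "\<lambda>x. x * _"] cong: if_cong)
  finally have "(\<Sum>i<n. \<Sum>j<n. tone n i * L i j * tinv n (tone n) j) = L 0 0" .
  moreover have "(\<Sum>i<n. tone n i * tone n i) = 1"
    using n by (simp add: tone_def if_distrib cong: if_cong)
  ultimately show "L 0 0 = 1"
    using normalized tone_in_tball[OF \<open>0 < r\<close>] by simp
  obtain r' where "0 < r'" and "\<forall>s\<in>tball n (tone n) r'. s 0 \<noteq> 0 \<and> closed_at n L s"
    using L unfolding normalized_uncurling_def uncurling_def by blast
  then have "hankel_defect n L j 0 i = 0" if "i < n" "j < n" for i j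
    using that n by (intro hankel_defect_eq_0_if_closed_near_one)
  then show "\<forall>i<n. \<forall>j<n. L i j = hankel n (\<lambda>m. L m 0) i j"
    by (auto simp: hankel_defect_def hankel_def)
qed

theorem corollary10p5:
  fixes n :: nat
  assumes "1 \<le> n"
  shows "(\<forall>t. tmat n t 0 (n - 1) \<noteq> 0 \<longrightarrow>
            normalized_uncurling n (\<lambda>i j. (1 / tmat n t 0 (n - 1)) * mmul n (tmat n t) (exch n) i j))
       \<and> (\<forall>L. normalized_uncurling n L \<longrightarrow>
            (\<exists>t. tmat n t 0 (n - 1) \<noteq> 0 \<and>
               (\<forall>i<n. \<forall>j<n. L i j = (1 / tmat n t 0 (n - 1)) * mmul n (tmat n t) (exch n) i j)))"
proof -
  have n: "0 < n"
    using assms by simp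
  have "normalized_uncurling n (\<lambda>i j. (1 / tmat n t 0 (n - 1)) * mmul n (tmat n t) (exch n) i j)"
    if c: "tmat n t 0 (n - 1) \<noteq> 0" for t
  proof -
    let ?c = "tmat n t 0 (n - 1)"
    have "normalized_uncurling n (hankel n (\<lambda>m. t (n - 1 - m) / ?c))"
      using c by (intro normalized_uncurling_hankel n) (simp add: tmat_def)
    moreover have "\<forall>i<n. \<forall>j<n.
        (1 / ?c) * mmul n (tmat n t) (exch n) i j = hankel n (\<lambda>m. t (n - 1 - m) / ?c) i j"
      by (auto simp: mmul_tmat_exch hankel_def)
    ultimately show ?thesis
      by (simp only: normalized_uncurling_cong)
  qed
  moreover have "\<exists>t. tmat n t 0 (n - 1) \<noteq> 0 \<and>
      (\<forall>i<n. \<forall>j<n. L i j = (1 / tmat n t 0 (n - 1)) * mmul n (tmat n t) (exch n) i j)"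
    if L: "normalized_uncurling n L" for L
  proof -
    define t where "t m = L (n - 1 - m) 0" for m
    have t: "tmat n t 0 (n - 1) = 1"
      using normalized_uncurling_imp_hankel(1)[OF L n] by (simp add: tmat_def t_def)
    have "L i j = mmul n (tmat n t) (exch n) i j" if "i < n" "j < n" for i j
      using normalized_uncurling_imp_hankel(2)[OF L n, rule_format, OF that] that
      by (simp add: mmul_tmat_exch hankel_def t_def)
    with t show ?thesis by (intro exI[of _ t]) simp
  qed
  ultimately show ?thesis by blast
qed

end
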